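(* Let $X$ be a nonempty set, $F:X\rightrightarrows Y$ with $F(x)\in\mathcal P^0_{\mp C}(Y)$ for all $x$, $\mp C$-closed and $\mp C$-bounded valued, let $e\in-\mathrm{int}(C)$, and assume that for all $x,y\in X$, $F(x)\preceq^sF(y)$ or $F(y)\preceq^sF(x)$. If $x_0\in X$ is an $s$-maximal (resp. $s$-minimal) solution of $(s\text{-}SOP)$, then $x_0$ is a strongly maximal (resp. strongly minimal) solution of the vector problem of maximizing (resp. minimizing) $v_e(F(x))$ over $x\in X$.
   Context: $Y$ is a real topological linear space and $C\subset Y$ is a convex, closed, pointed cone with nonempty interior. $\mathbb R^2$ is ordered by $\mathbb R^2_+$. $\mathcal P^0_{\mp C}(Y)$ is the family of nonempty $A\subset Y$ with $A+C\neq Y$ and $A-C\neq Y$. $C$-closed: $A+C$ closed; $C$-bounded: for every neighborhood $U$ of $0$ there is $t>0$ with $A\subset tU+C$; $\mp C$-closed/bounded: holds for $C$ and $-C$. $A\preceq^s B$ iff $B\subset A+C$ and $A\subset B-C$. $x_0$ is an $s$-maximal (minimal) solution of $(s\text{-}SOP)$ if for every $x\in X$, $F(x_0)\preceq^sF(x)$ implies $F(x)\preceq^sF(x_0)$ (resp. $F(x)\preceq^sF(x_0)$ implies $F(x_0)\preceq^sF(x)$). For $e\in-\mathrm{int}(C)$: $\phi_{e,A}(y)=\inf\{t\in\mathbb R: y\in te+A+C\}$; $G^\ell_e(A,B)=\sup_{b\in B}\phi_{e,A}(b)$; $G^u_e(B,A):=-G^\ell_e(-B,-A)$; $v_e(A)=\big(-G^\ell_e(\{0\},A),\,G^u_e(A,\{0\})\big)$.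 For $f:X\to\mathbb R^2$, $\bar x$ is a strongly maximal solution of $\max f$ if $f(x)\le_{\mathbb R^2_+}f(\bar x)$ for all $x\in X$, and a strongly minimal solution of $\min f$ if $f(\bar x)\le_{\mathbb R^2_+}f(x)$ for all $x\in X$. *)

theory Defs
  imports "HOL-Analysis.Analysis" "HOL-Library.Extended_Real"
begin

class real_topological_vector = real_vector + topological_ab_group_add +
  assumes tendsto_scaleR_Pair:
    "LIM x (nhds (a::real) \<times>\<^sub>F nhds b). fst x *\<^sub>R snd x :> nhds (a *\<^sub>R b)"

definition msum :: "'a::real_vector set \<Rightarrow> 'a set \<Rightarrow> 'a set" (infixl "\<oplus>" 65) where
  "A \<oplus> B = {a + b | a b. a \<in> A \<and> b \<in> B}"

definition mneg :: "'a::real_vector set \<Rightarrow> 'a set" where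
  "mneg A = uminus ` A"

definition proper_ordering_cone :: "'a::real_topological_vector set \<Rightarrow> bool" where
  "proper_ordering_cone C \<longleftrightarrow> cone C \<and> convex C \<and> closed C \<and> C \<inter> mneg C = {0}
     \<and> interior C \<noteq> {}"

definition P0 :: "'a::real_vector set \<Rightarrow> 'a set set" where
  "P0 C = {A. A \<noteq> {} \<and> A \<oplus> C \<noteq> UNIV \<and> A \<oplus> mneg C \<noteq> UNIV}"

definition C_closed :: "'a::real_topological_vector set \<Rightarrow> 'a set \<Rightarrow> bool" where
  "C_closed C A \<longleftrightarrow> closed (A \<oplus> C)"

definition C_bounded :: "'a::real_topological_vector set \<Rightarrow> 'a set \<Rightarrow> bool" where
  "C_bounded C A \<longleftrightarrow> (\<forall>U. (\<exists>V. open V \<and> 0 \<in> V \<and> V \<subseteq> U) \<longrightarrow>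
       (\<exists>t>0. A \<subseteq> ((\<lambda>u. t *\<^sub>R u) ` U) \<oplus> C))"

definition mp_C_closed :: "'a::real_topological_vector set \<Rightarrow> 'a set \<Rightarrow> bool" where
  "mp_C_closed C A \<longleftrightarrow> C_closed C A \<and> C_closed (mneg C) A"

definition mp_C_bounded :: "'a::real_topological_vector set \<Rightarrow> 'a set \<Rightarrow> bool" where
  "mp_C_bounded C A \<longleftrightarrow> C_bounded C A \<and> C_bounded (mneg C) A"

definition set_less_s :: "'a::real_vector set \<Rightarrow> 'a set \<Rightarrow> 'a set \<Rightarrow> bool" where
  "set_less_s C A B \<longleftrightarrow> B \<subseteq> A \<oplus> C \<and> A \<subseteq> B \<oplus> mneg C"

definition s_maximal :: "'a::real_vector set \<Rightarrow> 'x set \<Rightarrow> ('x \<Rightarrow> 'a set) \<Rightarrow> 'x \<Rightarrow> bool" where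
  "s_maximal C X F x0 \<longleftrightarrow> x0 \<in> X \<and>
     (\<forall>x\<in>X. set_less_s C (F x0) (F x) \<longrightarrow> set_less_s C (F x) (F x0))"

definition s_minimal :: "'a::real_vector set \<Rightarrow> 'x set \<Rightarrow> ('x \<Rightarrow> 'a set) \<Rightarrow> 'x \<Rightarrow> bool" where
  "s_minimal C X F x0 \<longleftrightarrow> x0 \<in> X \<and>
     (\<forall>x\<in>X. set_less_s C (F x) (F x0) \<longrightarrow> set_less_s C (F x0) (F x))"

text \<open>Gerstewitz-type scalarization, valued in the extended reals (inf of empty set = +\<infinity>).\<close>
definition phi :: "'a::real_vector set \<Rightarrow> 'a \<Rightarrow> 'a set \<Rightarrow> 'a \<Rightarrow> ereal" where
  "phi C e A y = Inf {ereal t | t. y \<in> ({t *\<^sub>R e} \<oplus> A) \<oplus> C}"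

definition G_l :: "'a::real_vector set \<Rightarrow> 'a \<Rightarrow> 'a set \<Rightarrow> 'a set \<Rightarrow> ereal" where
  "G_l C e A B = (SUP b\<in>B. phi C e A b)"

definition G_u :: "'a::real_vector set \<Rightarrow> 'a \<Rightarrow> 'a set \<Rightarrow> 'a set \<Rightarrow> ereal" where
  "G_u C e B A = - G_l C e (mneg B) (mneg A)"

definition v_e :: "'a::real_vector set \<Rightarrow> 'a \<Rightarrow> 'a set \<Rightarrow> ereal \<times> ereal" where
  "v_e C e A = (- G_l C e {0} A, G_u C e A {0})"

definition le_R2 :: "ereal \<times> ereal \<Rightarrow> ereal \<times> ereal \<Rightarrow> bool" where
  "le_R2 p q \<longleftrightarrow> fst p \<le> fst q \<and> snd p \<le> snd q"

definition strongly_maximal :: "'x set \<Rightarrow> ('x \<Rightarrow> ereal \<times> ereal) \<Rightarrow> 'x \<Rightarrow> bool" where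
  "strongly_maximal X f xb \<longleftrightarrow> xb \<in> X \<and> (\<forall>x\<in>X. le_R2 (f x) (f xb))"

definition strongly_minimal :: "'x set \<Rightarrow> ('x \<Rightarrow> ereal \<times> ereal) \<Rightarrow> 'x \<Rightarrow> bool" where
  "strongly_minimal X f xb \<longleftrightarrow> xb \<in> X \<and> (\<forall>x\<in>X. le_R2 (f xb) (f x))"

end

theory Submission
  imports Defs
begin

text \<open>The scalarization vector \<open>v_e\<close> is monotone with respect to \<open>\<preceq>\<^sup>s\<close>: both of its
  components are built from \<open>\<phi>\<^sub>e\<close>, which decreases when its point is moved up by \<open>C\<close> and
  when its set is replaced by one lying above it. Since the sets \<open>F x\<close> are totally
  \<open>\<preceq>\<^sup>s\<close>-comparable, an \<open>s\<close>-maximal \<open>x\<^sub>0\<close> satisfies \<open>F x \<preceq>\<^sup>s F x\<^sub>0\<close> for every \<open>x\<close>, and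
  monotonicity gives \<open>v_e (F x) \<le> v_e (F x\<^sub>0)\<close>; the minimal case is symmetric.\<close>

lemma cone_convex_add:
  assumes "cone C" "convex C" "a \<in> C" "b \<in> C"
  shows "a + b \<in> C"
  using assms by (intro convex_cone_add) (auto simp: convex_cone_def cone_def conic_def)

lemma mem_singleton_msum_msum:
  "y \<in> {u} \<oplus> A \<oplus> C \<longleftrightarrow> (\<exists>a\<in>A. \<exists>c\<in>C. y = u + a + c)"
  unfolding msum_def by blast

lemma phi_add_cone_le:
  assumes "cone C" "convex C" "c \<in> C"
  shows "phi C e A (y + c) \<le> phi C e A y"
  unfolding phi_def
proof (rule Inf_superset_mono, safe)
  fix t assume "y \<in> {t *\<^sub>R e} \<oplus> A \<oplus> C"
  then obtain a c' where "a \<in> A" "c' \<in> C" "y = t *\<^sub>R e + a + c'"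
    unfolding mem_singleton_msum_msum by blast
  moreover have "c' + c \<in> C"
    using cone_convex_add[OF assms(1,2) \<open>c' \<in> C\<close> assms(3)] .
  ultimately have "y + c \<in> {t *\<^sub>R e} \<oplus> A \<oplus> C"
    unfolding mem_singleton_msum_msum by (metis add.assoc)
  then show "\<exists>t'. ereal t = ereal t' \<and> y + c \<in> {t' *\<^sub>R e} \<oplus> A \<oplus> C" by blast
qed

lemma phi_antimono_set:
  assumes "cone C" "convex C" "B \<subseteq> A \<oplus> C"
  shows "phi C e A y \<le> phi C e B y"
  unfolding phi_def
proof (rule Inf_superset_mono, safe)
  fix t assume "y \<in> {t *\<^sub>R e} \<oplus> B \<oplus> C"
  then obtain b c where "b \<in> B" "c \<in> C" "y = t *\<^sub>R e + b + c"
    unfolding mem_singleton_msum_msum by blast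
  moreover from \<open>b \<in> B\<close> obtain a c' where "a \<in> A" "c' \<in> C" "b = a + c'"
    using assms(3) unfolding msum_def by auto
  moreover have "c' + c \<in> C"
    using cone_convex_add[OF assms(1,2) \<open>c' \<in> C\<close> \<open>c \<in> C\<close>] .
  ultimately have "y \<in> {t *\<^sub>R e} \<oplus> A \<oplus> C"
    unfolding mem_singleton_msum_msum by (metis add.assoc)
  then show "\<exists>t'. ereal t = ereal t' \<and> y \<in> {t' *\<^sub>R e} \<oplus> A \<oplus> C" by blast
qed

lemma G_l_mono_right:
  assumes "cone C" "convex C" "B \<subseteq> B' \<oplus> C"
  shows "G_l C e A B \<le> G_l C e A B'"
  unfolding G_l_def
proof (rule SUP_least)
  fix b assume "b \<in> B"
  then obtain b' c where "b' \<in> B'" "c \<in> C" "b = b' + c"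
    using assms(3) unfolding msum_def by auto
  then have "phi C e A b \<le> phi C e A b'"
    using phi_add_cone_le[OF assms(1,2)] by simp
  also have "\<dots> \<le> (SUP b\<in>B'. phi C e A b)"
    using \<open>b' \<in> B'\<close> by (rule SUP_upper)
  finally show "phi C e A b \<le> (SUP b\<in>B'. phi C e A b)" .
qed

lemma G_u_mono_left:
  assumes "cone C" "convex C" "A \<subseteq> B \<oplus> mneg C"
  shows "G_u C e A D \<le> G_u C e B D"
proof -
  have "mneg A \<subseteq> mneg B \<oplus> C"
  proof
    fix x assume "x \<in> mneg A"
    then obtain b c where "b \<in> B" "c \<in> C" "x = - b + c"
      using assms(3) unfolding mneg_def msum_def by auto
    then show "x \<in> mneg B \<oplus> C" unfolding mneg_def msum_def by force
  qed
  then have "G_l C e (mneg B) (mneg D) \<le> G_l C e (mneg A) (mneg D)"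
    unfolding G_l_def using phi_antimono_set[OF assms(1,2)] by (intro SUP_mono') auto
  then show ?thesis unfolding G_u_def by simp
qed

lemma v_e_mono:
  assumes "cone C" "convex C" "set_less_s C A B"
  shows "le_R2 (v_e C e A) (v_e C e B)"
  using G_l_mono_right[OF assms(1,2), of B A e "{0}"] G_u_mono_left[OF assms(1,2), of A B e "{0}"]
    assms(3)
  unfolding le_R2_def v_e_def set_less_s_def by simp

theorem corollary1:
  fixes C :: "'y::real_topological_vector set"
    and X :: "'x set" and F :: "'x \<Rightarrow> 'y set" and e :: 'y and x0 :: 'x
  assumes "proper_ordering_cone C"
    and "X \<noteq> {}"
    and "\<forall>x\<in>X. F x \<in> P0 C"
    and "\<forall>x\<in>X. mp_C_closed C (F x)"
    and "\<forall>x\<in>X. mp_C_bounded C (F x)"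
    and "e \<in> mneg (interior C)"
    and "\<forall>x\<in>X. \<forall>y\<in>X. set_less_s C (F x) (F y) \<or> set_less_s C (F y) (F x)"
  shows "(s_maximal C X F x0 \<longrightarrow> strongly_maximal X (\<lambda>x. v_e C e (F x)) x0)
       \<and> (s_minimal C X F x0 \<longrightarrow> strongly_minimal X (\<lambda>x. v_e C e (F x)) x0)"
proof -
  have "cone C" "convex C"
    using assms(1) unfolding proper_ordering_cone_def by auto
  note v_mono = v_e_mono[OF this, of _ _ e]
  have "le_R2 (v_e C e (F x)) (v_e C e (F x0))" if "s_maximal C X F x0" "x \<in> X" for x
    using that assms(7) v_mono unfolding s_maximal_def by meson
  moreover have "le_R2 (v_e C e (F x0)) (v_e C e (F x))" if "s_minimal C X F x0" "x \<in> X" for x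
    using that assms(7) v_mono unfolding s_minimal_def by meson
  ultimately show ?thesis
    unfolding strongly_maximal_def strongly_minimal_def s_maximal_def s_minimal_def by blast
qed

end
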